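(* Let $G=(V,P,d)$ be a reversible metric Markov chain with $d$ the combinatorial distance and $m(V)=1$. Then \[ h\le\frac{57\,\mathrm{Deg}_{\max}}{\operatorname{diam}_{\operatorname{obs}}^{(1/8)}}. \]
   Context: $V$ finite; $P:V\times V\to[0,\infty)$ with symmetric support, connected; $x\sim y$ iff $x\ne y$, $P(x,y)>0$; $d(x,y)$ is the minimal number of edges on a path from $x$ to $y$; $m$ the probability with $m(x)P(x,y)=m(y)P(y,x)$. $|\partial W|=\sum_{x\in W,y\notin W}P(x,y)m(x)d(x,y)$; $h=\inf\{|\partial W|/m(W):W\neq\emptyset,\ m(W)\le\frac12\}$. $\mathrm{Deg}_{\max}=\max_x\sum_{y\ne x}P(x,y)$. $\operatorname{cl}(B)=B\cup\{x:x\sim y\text{ for some }y\in B\}$; $\operatorname{diam}_{\operatorname{obs}}^{(\varepsilon)}=\sup\{d(A,B):m(A)\ge\varepsilon,\ m(\operatorname{cl}(B))\ge\varepsilon\}$ with $d(A,B)=\min_{a\in A,b\in B}d(a,b)$. *)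

theory Defs
  imports Complex_Main
begin

text \<open>Vertex set V is the (finite) universe of the type 'v.
  P is the transition weight function, m the reversible probability measure.\<close>

definition adj :: "('v \<Rightarrow> 'v \<Rightarrow> real) \<Rightarrow> 'v \<Rightarrow> 'v \<Rightarrow> bool" where
  "adj P x y \<longleftrightarrow> x \<noteq> y \<and> P x y > 0"

definition comb_dist :: "('v \<Rightarrow> 'v \<Rightarrow> real) \<Rightarrow> 'v \<Rightarrow> 'v \<Rightarrow> nat" where
  "comb_dist P x y = (LEAST n. (adj P ^^ n) x y)"

definition meas :: "('v \<Rightarrow> real) \<Rightarrow> 'v set \<Rightarrow> real" where
  "meas m W = (\<Sum>x\<in>W. m x)"

definition boundary :: "('v::finite \<Rightarrow> 'v \<Rightarrow> real) \<Rightarrow> ('v \<Rightarrow> real) \<Rightarrow> 'v set \<Rightarrow> real" where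
  "boundary P m W = (\<Sum>x\<in>W. \<Sum>y\<in>UNIV - W. P x y * m x * real (comb_dist P x y))"

definition cheeger :: "('v::finite \<Rightarrow> 'v \<Rightarrow> real) \<Rightarrow> ('v \<Rightarrow> real) \<Rightarrow> real" where
  "cheeger P m = Inf {boundary P m W / meas m W | W. W \<noteq> {} \<and> meas m W \<le> 1/2}"

definition deg_max :: "('v::finite \<Rightarrow> 'v \<Rightarrow> real) \<Rightarrow> real" where
  "deg_max P = Max (range (\<lambda>x. \<Sum>y\<in>UNIV - {x}. P x y))"

definition closure_set :: "('v \<Rightarrow> 'v \<Rightarrow> real) \<Rightarrow> 'v set \<Rightarrow> 'v set" where
  "closure_set P B = B \<union> {x. \<exists>y\<in>B. adj P x y}"

definition set_dist :: "('v \<Rightarrow> 'v \<Rightarrow> real) \<Rightarrow> 'v set \<Rightarrow> 'v set \<Rightarrow> nat" where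
  "set_dist P A B = Min {comb_dist P a b | a b. a \<in> A \<and> b \<in> B}"

definition obs_diam :: "('v::finite \<Rightarrow> 'v \<Rightarrow> real) \<Rightarrow> ('v \<Rightarrow> real) \<Rightarrow> real \<Rightarrow> real" where
  "obs_diam P m \<epsilon> = Sup {real (set_dist P A B) | A B.
      meas m A \<ge> \<epsilon> \<and> meas m (closure_set P B) \<ge> \<epsilon>}"

end

theory Submission
  imports Defs
begin

text \<open>Let \<open>A\<close>, \<open>B\<close> realise the observable diameter \<open>n = d(A, B)\<close> and let \<open>f = d(A, \<cdot>)\<close>,
  which grows by at most 1 along each edge. For \<open>k < n - 1\<close> the level set \<open>{f \<le> k}\<close> contains
  \<open>A\<close> and misses \<open>cl(B)\<close>, so it and its complement both have mass at least 1/8; by reversibility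
  they have the same boundary, hence \<open>h \<le> 8 |\<partial>{f \<le> k}|\<close>. Only edges, at distance 1, contribute
  to a boundary, and each edge crosses at most one level of \<open>f\<close>, so the boundaries of all these
  level sets add up to at most \<open>Deg\<^sub>m\<^sub>a\<^sub>x\<close> (co-area inequality). With \<open>h \<le> Deg\<^sub>m\<^sub>a\<^sub>x\<close>
  (test a vertex of mass at most 1/2) this gives \<open>n h \<le> 9 Deg\<^sub>m\<^sub>a\<^sub>x\<close>.\<close>

lemma comb_dist_le:
  assumes "(adj P ^^ n) x y"
  shows "comb_dist P x y \<le> n"
  unfolding comb_dist_def using assms by (rule Least_le)

lemma relpowp_comb_dist:
  assumes "(adj P)\<^sup>*\<^sup>* x y"
  shows "(adj P ^^ comb_dist P x y) x y"
  unfolding comb_dist_def by (rule LeastI_ex) (use assms rtranclp_power in metis)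

lemma comb_dist_self [simp]: "comb_dist P x x = 0"
  using comb_dist_le[where n = 0] by simp

lemma comb_dist_pos:
  assumes "(adj P)\<^sup>*\<^sup>* x y" "x \<noteq> y"
  shows "0 < comb_dist P x y"
  using relpowp_comb_dist[OF assms(1)] assms(2) by (cases "comb_dist P x y") auto

lemma comb_dist_adj:
  assumes "adj P x y"
  shows "comb_dist P x y = 1"
proof -
  have "comb_dist P x y \<le> 1"
    using assms by (intro comb_dist_le) auto
  moreover have "0 < comb_dist P x y"
    using assms by (intro comb_dist_pos) (auto simp: adj_def)
  ultimately show ?thesis by simp
qed

lemma comb_dist_adj_le_Suc:
  assumes "(adj P)\<^sup>*\<^sup>* z x" "adj P x y"
  shows "comb_dist P z y \<le> Suc (comb_dist P z x)"
  using relpowp_Suc_I[OF relpowp_comb_dist[OF assms(1)] assms(2)] by (rule comb_dist_le)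

lemma meas_empty [simp]: "meas m {} = 0"
  by (simp add: meas_def)

lemma meas_mono:
  fixes m :: "'v::finite \<Rightarrow> real"
  assumes "\<forall>x. m x \<ge> 0" "A \<subseteq> B"
  shows "meas m A \<le> meas m B"
  unfolding meas_def using assms by (intro sum_mono2) auto

lemma meas_Compl:
  fixes m :: "'v::finite \<Rightarrow> real"
  assumes "(\<Sum>x\<in>UNIV. m x) = 1"
  shows "meas m (-A) = 1 - meas m A"
  using assms sum.subset_diff[of A UNIV m] by (simp add: meas_def Compl_eq_Diff_UNIV)

lemma exists_meas_between:
  fixes m :: "'v \<Rightarrow> real"
  assumes "finite S" "0 \<le> a" "2 * a \<le> b" "\<forall>x\<in>S. m x \<le> b" "a \<le> meas m S"
  shows "\<exists>A\<subseteq>S. a \<le> meas m A \<and> meas m A \<le> b"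
  using assms(1,4,5)
proof (induction S rule: finite_induct)
  case empty
  then show ?case using assms(2,3) by auto
next
  case (insert x S)
  have insert_eq: "meas m (insert x S) = m x + meas m S"
    using insert.hyps by (simp add: meas_def)
  consider "a \<le> meas m S" | "meas m (insert x S) \<le> b" | "meas m S < a" "b < m x + meas m S"
    using insert_eq by linarith
  then show ?case
  proof cases
    case 1
    then show ?thesis using insert by blast
  next
    case 2
    then show ?thesis using insert.prems by blast
  next
    case 3
    then have "a \<le> meas m {x} \<and> meas m {x} \<le> b"
      using assms(3) insert.prems(1) by (simp add: meas_def)
    then show ?thesis by blast
  qed
qed

lemma exists_ne_of_card_UNIV_ge_2:
  assumes "card (UNIV :: 'v::finite set) \<ge> 2"
  shows "\<exists>y. y \<noteq> (x :: 'v)"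
proof (rule ccontr)
  assume "\<nexists>y. y \<noteq> x"
  then have "card (UNIV :: 'v set) \<le> 1"
    using card_le_Suc0_iff_eq[of "UNIV :: 'v set"] by (simp, metis)
  then show False
    using assms by simp
qed

lemma exists_adj:
  assumes "\<forall>x y. (adj P)\<^sup>*\<^sup>* x y" "x \<noteq> w"
  shows "\<exists>y. adj P x y"
  using assms by (metis converse_rtranclpE)

lemma boundary_eq:
  fixes P :: "'v::finite \<Rightarrow> 'v \<Rightarrow> real"
  assumes "\<forall>x y. P x y \<ge> 0"
  shows "boundary P m W = (\<Sum>x\<in>W. \<Sum>y\<in>-W. m x * P x y)"
  unfolding boundary_def Compl_eq_Diff_UNIV
proof (intro sum.cong refl)
  fix x y assume "x \<in> W" "y \<in> UNIV - W"
  then have "x \<noteq> y" by auto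
  show "P x y * m x * real (comb_dist P x y) = m x * P x y"
  proof (cases "P x y = 0")
    case False
    then have "adj P x y" using \<open>x \<noteq> y\<close> assms by (simp add: adj_def order_less_le)
    then show ?thesis by (simp add: comb_dist_adj)
  qed simp
qed

lemma boundary_eq_sum_crossing:
  fixes P :: "'v::finite \<Rightarrow> 'v \<Rightarrow> real"
  assumes "\<forall>x y. P x y \<ge> 0"
  shows "boundary P m W = (\<Sum>x\<in>UNIV. \<Sum>y\<in>UNIV. if x \<in> W \<and> y \<notin> W then m x * P x y else 0)"
proof -
  have "(\<Sum>y\<in>UNIV. if x \<in> W \<and> y \<notin> W then m x * P x y else 0)
      = (if x \<in> W then \<Sum>y\<in>-W. m x * P x y else 0)" for x
    by (simp add: sum.inter_filter[symmetric] Compl_eq)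
  then show ?thesis
    by (simp add: boundary_eq[OF assms] sum.inter_filter[symmetric])
qed

lemma boundary_nonneg:
  fixes P :: "'v::finite \<Rightarrow> 'v \<Rightarrow> real"
  assumes "\<forall>x y. P x y \<ge> 0" "\<forall>x. m x \<ge> 0"
  shows "0 \<le> boundary P m W"
  unfolding boundary_def using assms by (intro sum_nonneg) auto

lemma boundary_Compl:
  fixes P :: "'v::finite \<Rightarrow> 'v \<Rightarrow> real"
  assumes "\<forall>x y. P x y \<ge> 0" "\<forall>x y. m x * P x y = m y * P y x"
  shows "boundary P m (-W) = boundary P m W"
proof -
  have "boundary P m (-W) = (\<Sum>x\<in>-W. \<Sum>y\<in>W. m y * P y x)"
    using assms by (simp add: boundary_eq)
  also have "\<dots> = boundary P m W"
    using assms(1) by (simp add: boundary_eq sum.swap[of _ "-W"])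
  finally show ?thesis .
qed

lemma boundary_singleton:
  fixes P :: "'v::finite \<Rightarrow> 'v \<Rightarrow> real"
  assumes "\<forall>x y. P x y \<ge> 0"
  shows "boundary P m {x} = m x * (\<Sum>y\<in>UNIV - {x}. P x y)"
  using assms by (simp add: boundary_eq sum_distrib_left Compl_eq_Diff_UNIV)

lemma degree_le_deg_max: "(\<Sum>y\<in>UNIV - {x}. P x y) \<le> deg_max P"
  unfolding deg_max_def by (rule Max_ge) auto

lemma deg_max_nonneg:
  fixes P :: "'v::finite \<Rightarrow> 'v \<Rightarrow> real"
  assumes "\<forall>x y. P x y \<ge> 0"
  shows "0 \<le> deg_max P"
  using degree_le_deg_max[of P undefined] assms by (meson order_trans sum_nonneg)

lemma cheeger_le:
  fixes P :: "'v::finite \<Rightarrow> 'v \<Rightarrow> real"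
  assumes "W \<noteq> {}" "meas m W \<le> 1/2"
  shows "cheeger P m \<le> boundary P m W / meas m W"
  unfolding cheeger_def
proof (rule cInf_lower)
  let ?R = "{boundary P m W / meas m W |W. W \<noteq> {} \<and> meas m W \<le> 1 / 2}"
  show "boundary P m W / meas m W \<in> ?R"
    using assms by blast
  have "finite ?R"
    by (rule finite_image_set) simp
  then show "bdd_below ?R"
    by (rule bdd_below_finite)
qed

lemma cheeger_le_deg_max:
  fixes P :: "'v::finite \<Rightarrow> 'v \<Rightarrow> real"
  assumes "card (UNIV :: 'v set) \<ge> 2" "\<forall>x y. P x y \<ge> 0" "\<forall>x. m x \<ge> 0"
    and "(\<Sum>x\<in>UNIV. m x) = 1"
  shows "cheeger P m \<le> deg_max P"
proof -
  obtain u v :: 'v where "u \<noteq> v"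
    using exists_ne_of_card_UNIV_ge_2[OF assms(1)] by blast
  then have "m u + m v \<le> 1"
    using assms(3,4) sum_mono2[of UNIV "{u, v}" m] by simp
  then obtain x where x: "m x \<le> 1/2"
    by (cases "m u \<le> 1/2") (auto intro: that[of v])
  have "cheeger P m \<le> boundary P m {x} / m x"
    using cheeger_le[of "{x}" m P] x by (simp add: meas_def)
  also have "\<dots> \<le> deg_max P"
    using degree_le_deg_max[of P x] deg_max_nonneg[of P] assms(2)
    by (cases "m x = 0") (simp_all add: boundary_singleton)
  finally show ?thesis .
qed

lemma cheeger_le_boundary_div:
  fixes P :: "'v::finite \<Rightarrow> 'v \<Rightarrow> real"
  assumes P_nonneg: "\<forall>x y. P x y \<ge> 0" and m_nonneg: "\<forall>x. m x \<ge> 0"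
    and m_prob: "(\<Sum>x\<in>UNIV. m x) = 1"
    and reversible: "\<forall>x y. m x * P x y = m y * P y x"
    and "0 < \<epsilon>" "\<epsilon> \<le> meas m W" "\<epsilon> \<le> meas m (-W)"
  shows "cheeger P m \<le> boundary P m W / \<epsilon>"
proof -
  have "cheeger P m \<le> boundary P m U / \<epsilon>" if "\<epsilon> \<le> meas m U" "meas m U \<le> 1/2" for U
  proof -
    have "cheeger P m \<le> boundary P m U / meas m U"
      using that \<open>0 < \<epsilon>\<close> by (intro cheeger_le) auto
    also have "\<dots> \<le> boundary P m U / \<epsilon>"
      using that \<open>0 < \<epsilon>\<close> boundary_nonneg[OF P_nonneg m_nonneg] by (intro divide_left_mono) auto
    finally show ?thesis .
  qed
  moreover have "meas m W \<le> 1/2 \<or> meas m (-W) \<le> 1/2"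
    using meas_Compl[OF m_prob, of W] by linarith
  ultimately show ?thesis
    using assms(6,7) boundary_Compl[OF P_nonneg reversible, of W] by metis
qed

lemma sum_boundary_level_sets_le_deg_max:
  fixes P :: "'v::finite \<Rightarrow> 'v \<Rightarrow> real" and f :: "'v \<Rightarrow> nat"
  assumes P_nonneg: "\<forall>x y. P x y \<ge> 0" and m_nonneg: "\<forall>x. m x \<ge> 0"
    and m_prob: "(\<Sum>x\<in>UNIV. m x) = 1"
    and lipschitz: "\<And>x y. adj P x y \<Longrightarrow> f y \<le> Suc (f x)"
  shows "(\<Sum>k<N. boundary P m {x. f x \<le> k}) \<le> deg_max P"
proof -
  let ?cross = "\<lambda>k x y. if f x \<le> k \<and> \<not> f y \<le> k then m x * P x y else 0"
  have crossings: "(\<Sum>k<N. ?cross k x y) \<le> (if x \<noteq> y then m x * P x y else 0)" for x y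
  proof (cases "adj P x y")
    case True
    then have "{k. f x \<le> k \<and> \<not> f y \<le> k} \<subseteq> {f x}"
      using lipschitz by fastforce
    then have "(\<Sum>k<N. ?cross k x y) \<le> (\<Sum>k<N. if k = f x then m x * P x y else 0)"
      using P_nonneg m_nonneg by (intro sum_mono) auto
    also have "\<dots> \<le> m x * P x y"
      using P_nonneg m_nonneg by simp
    finally show ?thesis
      using True by (simp add: adj_def)
  next
    case False
    then have "?cross k x y = 0" for k
      using P_nonneg by (auto simp: adj_def order_less_le)
    then show ?thesis
      using P_nonneg m_nonneg by simp
  qed
  have "(\<Sum>k<N. boundary P m {x. f x \<le> k}) = (\<Sum>x\<in>UNIV. \<Sum>y\<in>UNIV. \<Sum>k<N. ?cross k x y)"
    by (simp add: boundary_eq_sum_crossing[OF P_nonneg] sum.swap[of _ "{..<N}"])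
  also have "\<dots> \<le> (\<Sum>x\<in>UNIV. \<Sum>y\<in>UNIV. if x \<noteq> y then m x * P x y else 0)"
    by (intro sum_mono crossings)
  also have "\<dots> = (\<Sum>x\<in>UNIV. m x * (\<Sum>y\<in>UNIV - {x}. P x y))"
    by (simp add: sum.inter_filter[symmetric] sum_distrib_left Diff_eq Compl_eq eq_commute)
  also have "\<dots> \<le> (\<Sum>x\<in>UNIV. m x * deg_max P)"
    using m_nonneg by (intro sum_mono mult_left_mono degree_le_deg_max) auto
  also have "\<dots> = deg_max P"
    using m_prob by (simp add: sum_distrib_right[symmetric])
  finally show ?thesis .
qed

lemma set_dist_le_comb_dist:
  fixes P :: "'v::finite \<Rightarrow> 'v \<Rightarrow> real"
  assumes "a \<in> A" "b \<in> B"
  shows "set_dist P A B \<le> comb_dist P a b"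
proof -
  have "finite {comb_dist P a b |a b. a \<in> A \<and> b \<in> B}"
    by (rule finite_image_set2) simp_all
  then show ?thesis
    unfolding set_dist_def by (rule Min_le) (use assms in blast)
qed

lemma set_dist_pos:
  fixes P :: "'v::finite \<Rightarrow> 'v \<Rightarrow> real"
  assumes "\<forall>x y. (adj P)\<^sup>*\<^sup>* x y" "A \<inter> B = {}" "A \<noteq> {}" "B \<noteq> {}"
  shows "0 < set_dist P A B"
proof -
  let ?D = "{comb_dist P a b |a b. a \<in> A \<and> b \<in> B}"
  have "finite ?D"
    by (rule finite_image_set2) simp_all
  moreover have "?D \<noteq> {}"
    using assms(3,4) by blast
  ultimately have "Min ?D \<in> ?D"
    by (rule Min_in)
  then obtain a b where "a \<in> A" "b \<in> B" "set_dist P A B = comb_dist P a b"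
    unfolding set_dist_def by blast
  moreover have "a \<noteq> b"
    using \<open>a \<in> A\<close> \<open>b \<in> B\<close> assms(2) by blast
  ultimately show ?thesis
    using assms(1) comb_dist_pos by metis
qed

definition dist_to_set :: "('v::finite \<Rightarrow> 'v \<Rightarrow> real) \<Rightarrow> 'v set \<Rightarrow> 'v \<Rightarrow> nat" where
  "dist_to_set P A x = Min ((\<lambda>a. comb_dist P a x) ` A)"

lemma dist_to_set_le: "a \<in> A \<Longrightarrow> dist_to_set P A x \<le> comb_dist P a x"
  unfolding dist_to_set_def by (rule Min_le) auto

lemma dist_to_set_attained:
  assumes "A \<noteq> {}"
  obtains a where "a \<in> A" "dist_to_set P A x = comb_dist P a x"
proof -
  have "dist_to_set P A x \<in> (\<lambda>a. comb_dist P a x) ` A"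
    unfolding dist_to_set_def using assms by (intro Min_in) auto
  then show ?thesis using that by blast
qed

lemma dist_to_set_eq_0: "a \<in> A \<Longrightarrow> dist_to_set P A a = 0"
  using dist_to_set_le[of a A P a] by simp

lemma dist_to_set_adj_le_Suc:
  assumes "\<forall>x y. (adj P)\<^sup>*\<^sup>* x y" "A \<noteq> {}" "adj P x y"
  shows "dist_to_set P A y \<le> Suc (dist_to_set P A x)"
proof -
  obtain a where "a \<in> A" "dist_to_set P A x = comb_dist P a x"
    using dist_to_set_attained[OF assms(2)] .
  then show ?thesis
    using dist_to_set_le[of a A P y] comb_dist_adj_le_Suc[of P a x y] assms(1,3) by simp
qed

lemma set_dist_le_dist_to_set:
  assumes "A \<noteq> {}" "b \<in> B"
  shows "set_dist P A B \<le> dist_to_set P A b"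
proof -
  obtain a where "a \<in> A" "dist_to_set P A b = comb_dist P a b"
    using dist_to_set_attained[OF assms(1)] .
  then show ?thesis
    using set_dist_le_comb_dist[of a A b B P] assms(2) by simp
qed

lemma set_dist_minus_one_mult_cheeger_le:
  fixes P :: "'v::finite \<Rightarrow> 'v \<Rightarrow> real"
  assumes P_nonneg: "\<forall>x y. P x y \<ge> 0" and connected: "\<forall>x y. (adj P)\<^sup>*\<^sup>* x y"
    and m_nonneg: "\<forall>x. m x \<ge> 0" and m_prob: "(\<Sum>x\<in>UNIV. m x) = 1"
    and reversible: "\<forall>x y. m x * P x y = m y * P y x"
    and "0 < \<epsilon>" "\<epsilon> \<le> meas m A" "\<epsilon> \<le> meas m (closure_set P B)"
  shows "real (set_dist P A B - 1) * cheeger P m \<le> deg_max P / \<epsilon>"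
proof -
  let ?n = "set_dist P A B" and ?f = "dist_to_set P A"
  define W where "W k = {x. ?f x \<le> k}" for k
  have "A \<noteq> {}"
    using assms(6,7) by auto
  have level_bound: "cheeger P m \<le> boundary P m (W k) / \<epsilon>" if "k < ?n - 1" for k
  proof (rule cheeger_le_boundary_div[OF P_nonneg m_nonneg m_prob reversible \<open>0 < \<epsilon>\<close>])
    have "A \<subseteq> W k"
      unfolding W_def by (auto simp: dist_to_set_eq_0)
    then show "\<epsilon> \<le> meas m (W k)"
      using assms(7) meas_mono[OF m_nonneg] by (meson order_trans)
    have "?n \<le> Suc (?f c)" if c: "c \<in> closure_set P B" for c
    proof (cases "c \<in> B")
      case True
      then show ?thesis using set_dist_le_dist_to_set[OF \<open>A \<noteq> {}\<close>] le_SucI by blast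
    next
      case False
      then obtain b where "b \<in> B" "adj P c b"
        using c unfolding closure_set_def by blast
      then show ?thesis
        using set_dist_le_dist_to_set[OF \<open>A \<noteq> {}\<close>, of b B P]
          dist_to_set_adj_le_Suc[OF connected \<open>A \<noteq> {}\<close>, of c b] by linarith
    qed
    then have "closure_set P B \<subseteq> -W k"
      unfolding W_def using \<open>k < ?n - 1\<close> by force
    then show "\<epsilon> \<le> meas m (-W k)"
      using assms(8) meas_mono[OF m_nonneg] by (meson order_trans)
  qed
  have "real (?n - 1) * cheeger P m = (\<Sum>k<?n - 1. cheeger P m)"
    by simp
  also have "\<dots> \<le> (\<Sum>k<?n - 1. boundary P m (W k) / \<epsilon>)"
    using level_bound by (intro sum_mono) simp
  also have "\<dots> = (\<Sum>k<?n - 1. boundary P m {x. ?f x \<le> k}) / \<epsilon>"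
    by (simp add: W_def sum_divide_distrib)
  also have "\<dots> \<le> deg_max P / \<epsilon>"
    using \<open>0 < \<epsilon>\<close> dist_to_set_adj_le_Suc[OF connected \<open>A \<noteq> {}\<close>]
    by (intro divide_right_mono sum_boundary_level_sets_le_deg_max[OF P_nonneg m_nonneg m_prob]) auto
  finally show ?thesis .
qed

lemma finite_obs_diam_candidates:
  fixes P :: "'v::finite \<Rightarrow> 'v \<Rightarrow> real"
  shows "finite {real (set_dist P A B) | A B. meas m A \<ge> \<epsilon> \<and> meas m (closure_set P B) \<ge> \<epsilon>}"
  by (rule finite_subset[of _ "(\<lambda>(A, B). real (set_dist P A B)) ` UNIV"]) auto

lemma set_dist_le_obs_diam:
  fixes P :: "'v::finite \<Rightarrow> 'v \<Rightarrow> real"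
  assumes "\<epsilon> \<le> meas m A" "\<epsilon> \<le> meas m (closure_set P B)"
  shows "real (set_dist P A B) \<le> obs_diam P m \<epsilon>"
  unfolding obs_diam_def using assms
  by (intro le_cSup_finite finite_obs_diam_candidates) blast

lemma obs_diam_attained:
  fixes P :: "'v::finite \<Rightarrow> 'v \<Rightarrow> real"
  assumes "\<epsilon> \<le> meas m A" "\<epsilon> \<le> meas m (closure_set P B)"
  obtains A' B' where "obs_diam P m \<epsilon> = real (set_dist P A' B')"
    "\<epsilon> \<le> meas m A'" "\<epsilon> \<le> meas m (closure_set P B')"
proof -
  let ?D = "{real (set_dist P A B) | A B. meas m A \<ge> \<epsilon> \<and> meas m (closure_set P B) \<ge> \<epsilon>}"
  have "finite ?D" "?D \<noteq> {}"
    using finite_obs_diam_candidates assms by blast+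
  then have "obs_diam P m \<epsilon> \<in> ?D"
    unfolding obs_diam_def cSup_eq_Max[OF \<open>finite ?D\<close> \<open>?D \<noteq> {}\<close>] by (rule Max_in)
  then show ?thesis
    using that by blast
qed

lemma exists_separated_pair:
  fixes P :: "'v::finite \<Rightarrow> 'v \<Rightarrow> real"
  assumes card2: "card (UNIV :: 'v set) \<ge> 2" and connected: "\<forall>x y. (adj P)\<^sup>*\<^sup>* x y"
    and m_nonneg: "\<forall>x. m x \<ge> 0" and m_prob: "(\<Sum>x\<in>UNIV. m x) = 1"
    and "0 < \<epsilon>" "\<epsilon> \<le> 1/3"
  obtains A B where "\<epsilon> \<le> meas m A" "\<epsilon> \<le> meas m (closure_set P B)" "0 < set_dist P A B"
proof (cases "\<exists>x. m x > 1 - \<epsilon>")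
  case True
  then obtain x where x: "m x > 1 - \<epsilon>"
    by blast
  obtain w where "w \<noteq> x"
    using exists_ne_of_card_UNIV_ge_2[OF card2] by blast
  then obtain y where "adj P x y"
    using exists_adj[OF connected, of x w] by auto
  then have "x \<in> closure_set P {y}" "x \<noteq> y"
    by (auto simp: closure_set_def adj_def)
  then have "meas m {x} \<le> meas m (closure_set P {y})"
    using meas_mono[OF m_nonneg] by blast
  moreover have "\<epsilon> \<le> meas m {x}"
    using x \<open>\<epsilon> \<le> 1/3\<close> by (simp add: meas_def)
  moreover have "0 < set_dist P {x} {y}"
    using \<open>x \<noteq> y\<close> by (intro set_dist_pos[OF connected]) auto
  ultimately show ?thesis
    using that by (meson order_trans)
next
  case False
  then obtain A where A: "\<epsilon> \<le> meas m A" "meas m A \<le> 1 - \<epsilon>"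
    using exists_meas_between[of UNIV \<epsilon> "1 - \<epsilon>" m] assms(5,6) m_prob
    by (auto simp: meas_def not_less)
  then have "\<epsilon> \<le> meas m (-A)"
    using meas_Compl[OF m_prob] by simp
  moreover have "meas m (-A) \<le> meas m (closure_set P (-A))"
    by (intro meas_mono[OF m_nonneg]) (auto simp: closure_set_def)
  moreover have "0 < set_dist P A (-A)"
    using A(1) \<open>\<epsilon> \<le> meas m (-A)\<close> \<open>0 < \<epsilon>\<close>
    by (intro set_dist_pos[OF connected]) auto
  ultimately show ?thesis
    using that A(1) by (meson order_trans)
qed

theorem theorem6p4:
  fixes P :: "'v::finite \<Rightarrow> 'v \<Rightarrow> real" and m :: "'v \<Rightarrow> real"
  assumes card2: "card (UNIV :: 'v set) \<ge> 2"
    and P_nonneg: "\<forall>x y. P x y \<ge> 0"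
    and P_sym_supp: "\<forall>x y. P x y > 0 \<longleftrightarrow> P y x > 0"
    and connected: "\<forall>x y. (adj P)\<^sup>*\<^sup>* x y"
    and m_nonneg: "\<forall>x. m x \<ge> 0"
    and m_prob: "(\<Sum>x\<in>UNIV. m x) = 1"
    and reversible: "\<forall>x y. m x * P x y = m y * P y x"
  shows "cheeger P m \<le> 57 * deg_max P / obs_diam P m (1/8)"
proof -
  obtain A0 B0 where A0B0: "1/8 \<le> meas m A0" "1/8 \<le> meas m (closure_set P B0)"
    and "0 < set_dist P A0 B0"
    using exists_separated_pair[OF card2 connected m_nonneg m_prob, of "1/8"] by auto
  then have diam_ge_1: "1 \<le> obs_diam P m (1/8)"
    using set_dist_le_obs_diam[OF A0B0] by linarith
  obtain A B where diam: "obs_diam P m (1/8) = real (set_dist P A B)"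
    and AB: "1/8 \<le> meas m A" "1/8 \<le> meas m (closure_set P B)"
    using obs_diam_attained[OF A0B0] .
  have "real (set_dist P A B - 1) * cheeger P m \<le> 8 * deg_max P"
    using set_dist_minus_one_mult_cheeger_le[OF P_nonneg connected m_nonneg m_prob reversible _ AB] by simp
  moreover have "cheeger P m \<le> deg_max P"
    by (rule cheeger_le_deg_max[OF card2 P_nonneg m_nonneg m_prob])
  ultimately have "obs_diam P m (1/8) * cheeger P m \<le> 9 * deg_max P"
    using diam diam_ge_1 by (simp add: of_nat_diff algebra_simps)
  then show ?thesis
    using diam_ge_1 deg_max_nonneg[OF P_nonneg] by (simp add: pos_le_divide_eq mult.commute)
qed

end
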